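(* In the congestion game, let $R=\sup_{\lambda\ll\lambda_0}\mathrm{PoA}(\lambda)$, and assume that for each $w\in\mathcal{W}$ and every $x\in\mathcal{C}(w)$ there exists $e\in x$ with $c_e(t)>0$ for all $t>0$. Let $W_1,W_2,\dots$ be i.i.d. with law $\lambda_0\in\mathcal{P}(\mathcal{W})$. Then for every $\epsilon>0$ and $c>0$ there exists $N$ such that for all $n\ge N$, $$\mathbb{P}(\mathrm{PoA}_n(W_1,\dots,W_n)\ge R+\epsilon)\le e^{-cn}.$$
   Context: Congestion game: $\mathcal{W}$ finite set of types; $E$ finite set; $\mathcal{X}=2^E\setminus\{\emptyset\}$ (both finite, discrete); $\mathcal{C}$ assigns to each $w$ a nonempty set $\mathcal{C}(w)\subset\mathcal{X}$; each $c_e:[0,\infty)\to[0,\infty)$ is continuous and increasing; $\ell_e(m)=m\{(w,x):e\in x\}$ and $F(m,w,x)=\sum_{e\in x}c_e(\ell_e(m))$ for $m\in\mathcal{P}(\mathcal{W}\times\mathcal{X})$. A Nash equilibrium with type vector $\vec w=(w_1,\dots,w_n)$ is $(x_1,\dots,x_n)$ with $x_i\in\mathcal{C}(w_i)$ and $F(\frac1n\sum_k\delta_{(w_k,x_k)},w_i,x_i)=\min_{y\in\mathcal{C}(w_i)}F(\frac1n\sum_{k\ne i}\delta_{(w_k,x_k)}+\frac1n\delta_{(w_i,y)},w_i,y)$ for all $i$; these exist for all $n$ and $\vec w$. $\widehat{\mathcal{N}}_n(\vec w)$ = set of $\frac1n\sum_i\delta_{(w_i,x_i)}$ over such equilibria;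 $\widehat{\mathcal{A}}_n(\vec w)=\{\frac1n\sum_k\delta_{(w_k,x_k)}:x_i\in\mathcal{C}(w_i)\}$; $V(m)=\int F(m,w,x)\,m(dw,dx)$; $\mathrm{PoA}_n(\vec w)=\sup_{\widehat{\mathcal{N}}_n(\vec w)}V/\inf_{\widehat{\mathcal{A}}_n(\vec w)}V$. For $\lambda\in\mathcal{P}(\mathcal{W})$: $\mathcal{A}(\lambda)=\{m:\text{first marginal }\lambda,\ m\{(w,x):x\in\mathcal{C}(w)\}=1\}$, $\mathcal{M}(\lambda)$ = set of $m\in\mathcal{A}(\lambda)$ with $F(m,w,x)=\min_{y\in\mathcal{C}(w)}F(m,w,y)$ for $m$-a.e. $(w,x)$, and $\mathrm{PoA}(\lambda)=\sup_{\mathcal{M}(\lambda)}V/\inf_{\mathcal{A}(\lambda)}V$. *)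

theory Defs
  imports "HOL-Probability.Probability"
begin

text \<open>Probability measures on the finite sets W and W x X are represented as pmfs.
  A population state is a pmf on pairs (type, strategy), a strategy being a set of resources.\<close>

definition load :: "('w \<times> 'e set) pmf \<Rightarrow> 'e \<Rightarrow> real" where
  "load m e = measure_pmf.prob m {p. e \<in> snd p}"

definition cost :: "('e \<Rightarrow> real \<Rightarrow> real) \<Rightarrow> ('w \<times> 'e set) pmf \<Rightarrow> 'w \<Rightarrow> 'e set \<Rightarrow> real" where
  "cost c m w x = (\<Sum>e\<in>x. c e (load m e))"

definition social_cost :: "('e \<Rightarrow> real \<Rightarrow> real) \<Rightarrow> ('w \<times> 'e set) pmf \<Rightarrow> real" where
  "social_cost c m = measure_pmf.expectation m (\<lambda>p. cost c m (fst p) (snd p))"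

definition admissible :: "('w \<Rightarrow> 'e set set) \<Rightarrow> 'w pmf \<Rightarrow> ('w \<times> 'e set) pmf set" where
  "admissible C lam = {m. map_pmf fst m = lam \<and> measure_pmf.prob m {p. snd p \<in> C (fst p)} = 1}"

definition mf_equilibria :: "('w \<Rightarrow> 'e set set) \<Rightarrow> ('e \<Rightarrow> real \<Rightarrow> real) \<Rightarrow> 'w pmf
    \<Rightarrow> ('w \<times> 'e set) pmf set" where
  "mf_equilibria C c lam = {m \<in> admissible C lam.
     AE p in measure_pmf m. cost c m (fst p) (snd p) = (MIN y\<in>C (fst p). cost c m (fst p) y)}"

definition PoA :: "('w \<Rightarrow> 'e set set) \<Rightarrow> ('e \<Rightarrow> real \<Rightarrow> real) \<Rightarrow> 'w pmf \<Rightarrow> real" where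
  "PoA C c lam = Sup (social_cost c ` mf_equilibria C c lam) / Inf (social_cost c ` admissible C lam)"

definition emp :: "nat \<Rightarrow> (nat \<Rightarrow> 'w) \<Rightarrow> (nat \<Rightarrow> 'e set) \<Rightarrow> ('w \<times> 'e set) pmf" where
  "emp n ws xs = map_pmf (\<lambda>i. (ws i, xs i)) (pmf_of_set {..<n})"

definition is_nash :: "('w \<Rightarrow> 'e set set) \<Rightarrow> ('e \<Rightarrow> real \<Rightarrow> real) \<Rightarrow> nat \<Rightarrow> (nat \<Rightarrow> 'w)
    \<Rightarrow> (nat \<Rightarrow> 'e set) \<Rightarrow> bool" where
  "is_nash C c n ws xs \<longleftrightarrow> (\<forall>i<n. xs i \<in> C (ws i)) \<and>
     (\<forall>i<n. cost c (emp n ws xs) (ws i) (xs i)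
            = (MIN y\<in>C (ws i). cost c (emp n ws (xs(i := y))) (ws i) y))"

definition nash_emp :: "('w \<Rightarrow> 'e set set) \<Rightarrow> ('e \<Rightarrow> real \<Rightarrow> real) \<Rightarrow> nat \<Rightarrow> (nat \<Rightarrow> 'w)
    \<Rightarrow> ('w \<times> 'e set) pmf set" where
  "nash_emp C c n ws = {emp n ws xs | xs. is_nash C c n ws xs}"

definition adm_emp :: "('w \<Rightarrow> 'e set set) \<Rightarrow> nat \<Rightarrow> (nat \<Rightarrow> 'w) \<Rightarrow> ('w \<times> 'e set) pmf set" where
  "adm_emp C n ws = {emp n ws xs | xs. \<forall>i<n. xs i \<in> C (ws i)}"

definition PoA_n :: "('w \<Rightarrow> 'e set set) \<Rightarrow> ('e \<Rightarrow> real \<Rightarrow> real) \<Rightarrow> nat \<Rightarrow> (nat \<Rightarrow> 'w) \<Rightarrow> real" where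
  "PoA_n C c n ws = Sup (social_cost c ` nash_emp C c n ws) / Inf (social_cost c ` adm_emp C n ws)"

end

(*
  For large n, every Nash equilibrium of the n-player game, viewed as an empirical measure, is an
  eta-approximate mean-field equilibrium with eta -> 0, since the costs are uniformly continuous
  and a unilateral deviation changes every load by at most 1/n; equilibria exist because
  Rosenthal's potential decreases along improving deviations. If PoA_n stayed above R + eps for
  type vectors with values in S, compactness of the simplex would give limits of worst equilibria
  and of optimal profiles: a mean-field equilibrium and an admissible state with a common type
  marginal lambda supported in S. Social costs are continuous and bounded away from 0 on
  admissible states, so PoA(lambda) >= R + eps, contradicting the definition of R. Almost surely
  all W_i lie in the support of lambda0, so for large n the event in question is null.
*)
theory Submission
  imports Defs
begin

section \<open>Pointwise convergence of pmfs\<close>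

definition converges_pmf :: "(nat \<Rightarrow> 'a pmf) \<Rightarrow> 'a pmf \<Rightarrow> bool" where
  "converges_pmf m \<mu> \<longleftrightarrow> (\<forall>x. (\<lambda>k. pmf (m k) x) \<longlonglongrightarrow> pmf \<mu> x)"

lemma converges_pmf_subseq:
  assumes "converges_pmf m \<mu>" "strict_mono r"
  shows "converges_pmf (m \<circ> r) \<mu>"
  unfolding converges_pmf_def
proof
  fix x
  show "(\<lambda>k. pmf ((m \<circ> r) k) x) \<longlonglongrightarrow> pmf \<mu> x"
    using LIMSEQ_subseq_LIMSEQ[OF assms(1)[unfolded converges_pmf_def, rule_format] assms(2)]
    by (simp add: comp_def)
qed

lemma converges_pmf_seq_compact:
  fixes m :: "nat \<Rightarrow> 'a::finite pmf"
  obtains r \<mu> where "strict_mono r" "converges_pmf (m \<circ> r) \<mu>"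
proof -
  define v :: "nat \<Rightarrow> real ^ 'a" where "v k = (\<chi> x. pmf (m k) x)" for k
  have "\<forall>k. v k \<in> cbox 0 1"
    unfolding v_def mem_box_cart by (simp add: pmf_le_1)
  then obtain l r where r: "strict_mono r" and lim: "(v \<circ> r) \<longlonglongrightarrow> l"
    using seq_compactE[OF compact_imp_seq_compact[OF compact_cbox]] by blast
  define q where "q x = l $ x" for x
  have q: "(\<lambda>k. pmf (m (r k)) x) \<longlonglongrightarrow> q x" for x
    using tendsto_vec_nth[OF lim, of x] unfolding q_def v_def by (simp add: comp_def)
  have q_nonneg: "q x \<ge> 0" for x
    using q by (rule LIMSEQ_le_const) simp
  have "(\<Sum>x\<in>UNIV. pmf (m (r k)) x) = 1" for k
    by (rule sum_pmf_eq_1) auto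
  moreover have "(\<lambda>k. \<Sum>x\<in>UNIV. pmf (m (r k)) x) \<longlonglongrightarrow> sum q UNIV"
    by (intro tendsto_sum q)
  ultimately have "sum q UNIV = 1"
    by (simp add: LIMSEQ_const_iff)
  then have "(\<integral>\<^sup>+ x. ennreal (q x) \<partial>count_space UNIV) = 1"
    using q_nonneg by (simp add: nn_integral_count_space_finite)
  then have "pmf (embed_pmf q) = q"
    by (intro ext pmf_embed_pmf[OF q_nonneg])
  then show thesis
    using that[OF r, of "embed_pmf q"] q unfolding converges_pmf_def comp_def by simp
qed

lemma converges_pmf_eventually_in_set_pmf:
  assumes "converges_pmf m \<mu>" "x \<in> set_pmf \<mu>"
  shows "eventually (\<lambda>k. x \<in> set_pmf (m k)) sequentially"
  using assms(2) unfolding set_pmf_iff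
  by (rule tendsto_imp_eventually_ne[OF assms(1)[unfolded converges_pmf_def, rule_format]])

lemma converges_pmf_set_pmf_subset:
  assumes "converges_pmf m \<mu>" "\<And>k. set_pmf (m k) \<subseteq> A"
  shows "set_pmf \<mu> \<subseteq> A"
proof
  fix x assume "x \<in> set_pmf \<mu>"
  then obtain k where "x \<in> set_pmf (m k)"
    using converges_pmf_eventually_in_set_pmf[OF assms(1)] unfolding eventually_sequentially by blast
  then show "x \<in> A"
    using assms(2) by blast
qed

lemma converges_pmf_map:
  fixes m :: "nat \<Rightarrow> 'a::finite pmf"
  assumes "converges_pmf m \<mu>"
  shows "converges_pmf (\<lambda>k. map_pmf f (m k)) (map_pmf f \<mu>)"
  using assms unfolding converges_pmf_def pmf_map
  by (simp add: measure_measure_pmf_finite tendsto_sum)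

lemma converges_pmf_unique:
  assumes "converges_pmf m \<mu>" "converges_pmf m \<nu>"
  shows "\<mu> = \<nu>"
proof (rule pmf_eqI)
  fix x
  show "pmf \<mu> x = pmf \<nu> x"
    using assms LIMSEQ_unique unfolding converges_pmf_def by blast
qed

lemma pmf_ge_inverse_card:
  fixes m :: "'a::finite pmf"
  obtains x where "pmf m x \<ge> 1 / CARD('a)"
proof (rule ccontr)
  assume "\<not> thesis"
  then have "\<forall>x\<in>UNIV. pmf m x < 1 / CARD('a)"
    using that not_le by blast
  then have "(\<Sum>x\<in>UNIV. pmf m x) < (\<Sum>x\<in>(UNIV::'a set). 1 / CARD('a))"
    by (intro sum_strict_mono) auto
  moreover have "(\<Sum>x\<in>UNIV. pmf m x) = 1"
    by (rule sum_pmf_eq_1) auto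
  ultimately show False
    by simp
qed

section \<open>States of the mean-field game and empirical measures\<close>

lemma load_eq_sum:
  fixes m :: "('w::finite \<times> 'e::finite set) pmf"
  shows "load m e = (\<Sum>p | e \<in> snd p. pmf m p)"
  unfolding load_def by (simp add: measure_measure_pmf_finite)

lemma social_cost_eq_sum:
  fixes m :: "('w::finite \<times> 'e::finite set) pmf"
  shows "social_cost c m = (\<Sum>p\<in>UNIV. pmf m p * cost c m (fst p) (snd p))"
  unfolding social_cost_def by (subst integral_measure_pmf_real[where A=UNIV]) (auto simp: mult.commute)

lemma mem_admissible_iff:
  "m \<in> admissible C lam \<longleftrightarrow> map_pmf fst m = lam \<and> (\<forall>p\<in>set_pmf m. snd p \<in> C (fst p))"
  unfolding admissible_def by (simp add: measure_pmf.prob_eq_1 AE_measure_pmf_iff)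

definition approx_equilibrium ::
    "('w \<Rightarrow> 'e set set) \<Rightarrow> ('e \<Rightarrow> real \<Rightarrow> real) \<Rightarrow> real \<Rightarrow> ('w \<times> 'e set) pmf \<Rightarrow> bool" where
  "approx_equilibrium C c \<eta> m \<longleftrightarrow> (\<forall>p\<in>set_pmf m. snd p \<in> C (fst p) \<and>
     (\<forall>y\<in>C (fst p). cost c m (fst p) (snd p) \<le> cost c m (fst p) y + \<eta>))"

lemma mf_equilibriaI:
  fixes C :: "'w \<Rightarrow> 'e::finite set set"
  assumes "approx_equilibrium C c 0 m"
  shows "m \<in> mf_equilibria C c (map_pmf fst m)"
proof -
  have "cost c m (fst p) (snd p) = (MIN y\<in>C (fst p). cost c m (fst p) y)" if "p \<in> set_pmf m" for p
    using assms that unfolding approx_equilibrium_def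
    by (intro antisym Min_le Min.boundedI) auto
  then show ?thesis
    using assms unfolding mf_equilibria_def approx_equilibrium_def mem_admissible_iff AE_measure_pmf_iff
    by blast
qed

lemma set_pmf_emp: "n > 0 \<Longrightarrow> set_pmf (emp n ws xs) = (\<lambda>i. (ws i, xs i)) ` {..<n}"
  unfolding emp_def by (simp add: lessThan_empty_iff)

lemma map_fst_emp: "map_pmf fst (emp n ws xs) = map_pmf ws (pmf_of_set {..<n})"
  unfolding emp_def by (simp add: pmf.map_comp comp_def)

definition num_users :: "nat \<Rightarrow> (nat \<Rightarrow> 'e set) \<Rightarrow> 'e \<Rightarrow> nat" where
  "num_users n xs e = card {i\<in>{..<n}. e \<in> xs i}"

lemma num_users_le: "num_users n xs e \<le> n"
  unfolding num_users_def using card_mono[of "{..<n}" "{i\<in>{..<n}. e \<in> xs i}"] by auto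

lemma num_users_fun_upd:
  assumes "i < n"
  shows "num_users n (xs(i := y)) e + of_bool (e \<in> xs i) = num_users n xs e + of_bool (e \<in> y)"
proof -
  define D where "D = {j\<in>{..<n}. j \<noteq> i \<and> e \<in> xs j}"
  have D: "finite D" "i \<notin> D"
    unfolding D_def by auto
  have "{j\<in>{..<n}. e \<in> (xs(i := y)) j} = (if e \<in> y then insert i D else D)"
    "{j\<in>{..<n}. e \<in> xs j} = (if e \<in> xs i then insert i D else D)"
    using assms unfolding D_def by auto
  then show ?thesis
    unfolding num_users_def using D by auto
qed

lemma load_emp: "n > 0 \<Longrightarrow> load (emp n ws xs) e = num_users n xs e / n"
  unfolding load_def emp_def num_users_def
  by (simp add: measure_pmf_of_set lessThan_empty_iff vimage_def Int_def)

lemma cost_emp: "n > 0 \<Longrightarrow> cost c (emp n ws xs) w x = (\<Sum>e\<in>x. c e (num_users n xs e / n))"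
  unfolding cost_def by (simp add: load_emp)

lemma finite_emp_image:
  fixes ws :: "nat \<Rightarrow> 'w" and A :: "(nat \<Rightarrow> 'e::finite set) set"
  assumes "n > 0"
  shows "finite (emp n ws ` A)"
proof -
  have "emp n ws xs \<in> emp n ws ` (Pi\<^sub>E {..<n} (\<lambda>_. UNIV))" for xs
  proof (rule image_eqI)
    show "emp n ws xs = emp n ws (restrict xs {..<n})"
      unfolding emp_def using assms by (intro map_pmf_cong) (auto simp: lessThan_empty_iff)
  qed simp
  then have "emp n ws ` A \<subseteq> emp n ws ` (Pi\<^sub>E {..<n} (\<lambda>_. UNIV))"
    by blast
  then show ?thesis
    by (rule finite_subset) (simp add: finite_PiE)
qed

lemma sum_lessThan_Suc_diff:
  fixes f :: "nat \<Rightarrow> 'a::ab_group_add"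
  assumes "a' + of_bool b = a + of_bool b'"
  shows "(\<Sum>k<a'. f (Suc k)) - (\<Sum>k<a. f (Suc k)) = (if b' then f a' else 0) - (if b then f a else 0)"
  using assms by (cases b; cases b') (auto simp: add.commute)

definition rosenthal_potential :: "('e::finite \<Rightarrow> real \<Rightarrow> real) \<Rightarrow> nat \<Rightarrow> (nat \<Rightarrow> 'e set) \<Rightarrow> real" where
  "rosenthal_potential c n xs = (\<Sum>e\<in>UNIV. \<Sum>k<num_users n xs e. c e (Suc k / n))"

lemma rosenthal_potential_fun_upd:
  assumes "i < n"
  shows "rosenthal_potential c n (xs(i := y)) - rosenthal_potential c n xs
     = cost c (emp n ws (xs(i := y))) w y - cost c (emp n ws xs) w' (xs i)"
proof -
  have "rosenthal_potential c n (xs(i := y)) - rosenthal_potential c n xs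
     = (\<Sum>e\<in>UNIV. (if e \<in> y then c e (num_users n (xs(i := y)) e / n) else 0)
                  - (if e \<in> xs i then c e (num_users n xs e / n) else 0))"
    unfolding rosenthal_potential_def sum_subtractf[symmetric]
    by (intro sum.cong refl sum_lessThan_Suc_diff[where f="\<lambda>k. c _ (k / n)"] num_users_fun_upd assms)
  also have "\<dots> = (\<Sum>e\<in>y. c e (num_users n (xs(i := y)) e / n)) - (\<Sum>e\<in>xs i. c e (num_users n xs e / n))"
    by (simp add: sum_subtractf sum.inter_restrict[symmetric])
  finally show ?thesis
    using assms by (simp add: cost_emp)
qed

lemma is_nashI:
  fixes C :: "'w \<Rightarrow> 'e::finite set set"
  assumes "\<forall>i<n. xs i \<in> C (ws i)"
    and "\<And>i y. i < n \<Longrightarrow> y \<in> C (ws i) \<Longrightarrow>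
           cost c (emp n ws xs) (ws i) (xs i) \<le> cost c (emp n ws (xs(i := y))) (ws i) y"
  shows "is_nash C c n ws xs"
proof -
  have "cost c (emp n ws xs) (ws i) (xs i) = (MIN y\<in>C (ws i). cost c (emp n ws (xs(i := y))) (ws i) y)"
    if "i < n" for i
  proof (rule antisym)
    show "cost c (emp n ws xs) (ws i) (xs i) \<le> (MIN y\<in>C (ws i). cost c (emp n ws (xs(i := y))) (ws i) y)"
      using assms that by (intro Min.boundedI) auto
    show "(MIN y\<in>C (ws i). cost c (emp n ws (xs(i := y))) (ws i) y) \<le> cost c (emp n ws xs) (ws i) (xs i)"
      using assms(1) that by (intro Min_le) (auto intro!: image_eqI[where x="xs i"])
  qed
  then show ?thesis
    using assms(1) unfolding is_nash_def by blast
qed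

lemma is_nashD:
  fixes C :: "'w \<Rightarrow> 'e::finite set set"
  assumes "is_nash C c n ws xs" "i < n" "y \<in> C (ws i)"
  shows "cost c (emp n ws xs) (ws i) (xs i) \<le> cost c (emp n ws (xs(i := y))) (ws i) y"
  using assms unfolding is_nash_def by (auto intro!: Min_le)

lemma cost_emp_fun_upd_le:
  fixes \<epsilon> :: real
  assumes i: "i < n" and n: "1 / n < d"
    and d: "\<And>e s t. s \<in> {0..1} \<Longrightarrow> t \<in> {0..1} \<Longrightarrow> dist t s < d \<Longrightarrow> dist (c e t) (c e s) < \<epsilon>"
  shows "cost c (emp n ws (xs(i := y))) w y \<le> cost c (emp n ws xs) w y + card y * \<epsilon>"
proof -
  have n0: "n > 0"
    using i by simp
  have "c e (num_users n (xs(i := y)) e / n) \<le> c e (num_users n xs e / n) + \<epsilon>" for e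
  proof -
    have "\<bar>real (num_users n (xs(i := y)) e) - num_users n xs e\<bar> \<le> 1"
      using num_users_fun_upd[OF i, of xs y e] by (auto simp: of_bool_def split: if_splits)
    then have "dist (num_users n (xs(i := y)) e / n) (num_users n xs e / n) < d"
      using n n0 by (simp add: dist_real_def diff_divide_distrib[symmetric] abs_divide divide_right_mono
          order_le_less_trans[of _ "1 / n"])
    moreover have "num_users n xs' e / n \<in> {0..1}" for xs'
      using num_users_le[of n xs' e] n0 by (simp add: divide_le_eq_1)
    ultimately have "dist (c e (num_users n (xs(i := y)) e / n)) (c e (num_users n xs e / n)) < \<epsilon>"
      using d by blast
    then show ?thesis
      by (simp add: dist_real_def)
  qed
  then have "cost c (emp n ws (xs(i := y))) w y \<le> (\<Sum>e\<in>y. c e (num_users n xs e / n) + \<epsilon>)"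
    unfolding cost_emp[OF n0] by (rule sum_mono)
  also have "\<dots> = cost c (emp n ws xs) w y + card y * \<epsilon>"
    by (simp add: cost_emp[OF n0] sum.distrib)
  finally show ?thesis .
qed

section \<open>Congestion games with continuous costs\<close>

locale congestion_game =
  fixes C :: "'w::finite \<Rightarrow> 'e::finite set set"
    and c :: "'e \<Rightarrow> real \<Rightarrow> real"
  assumes C_nonempty: "\<And>w. C w \<noteq> {}"
    and c_continuous: "\<And>e. continuous_on {0..} (c e)"
    and c_mono: "\<And>e. mono_on {0..} (c e)"
    and c_nonneg: "\<And>e t. t \<ge> 0 \<Longrightarrow> c e t \<ge> 0"
    and c_pos: "\<And>w x. x \<in> C w \<Longrightarrow> \<exists>e\<in>x. \<forall>t>0. c e t > 0"
begin

lemma c_le: "0 \<le> s \<Longrightarrow> s \<le> t \<Longrightarrow> c e s \<le> c e t"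
  using c_mono by (rule mono_onD) auto

lemma cost_nonneg: "cost c m w x \<ge> 0"
  unfolding cost_def load_def by (intro sum_nonneg c_nonneg measure_nonneg)

lemma cost_le: "cost c m w x \<le> (\<Sum>e\<in>UNIV. c e 1)"
proof -
  have "cost c m w x \<le> (\<Sum>e\<in>x. c e 1)"
    unfolding cost_def load_def by (intro sum_mono c_le measure_nonneg measure_pmf.prob_le_1)
  also have "\<dots> \<le> (\<Sum>e\<in>UNIV. c e 1)"
    by (intro sum_mono2 c_nonneg) auto
  finally show ?thesis .
qed

lemma social_cost_nonneg: "social_cost c m \<ge> 0"
  unfolding social_cost_def by (intro integral_nonneg_AE AE_I2 cost_nonneg)

lemma social_cost_le: "social_cost c m \<le> (\<Sum>e\<in>UNIV. c e 1)" for m :: "('w \<times> 'e set) pmf"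
  unfolding social_cost_def
  by (intro measure_pmf.integral_le_const AE_I2 cost_le integrable_measure_pmf_finite) simp

lemma social_cost_lower_bound:
  obtains \<delta> where "\<delta> > 0"
    "\<And>m. \<forall>p\<in>set_pmf m. snd p \<in> C (fst p) \<Longrightarrow> social_cost c m \<ge> \<delta>"
proof -
  define K where "K = real CARD('w \<times> 'e set)"
  define P where "P = {e. \<forall>t>0. c e t > 0}"
  define \<delta> where "\<delta> = Min ((\<lambda>e. c e (1 / K)) ` P) / K"
  have K: "K > 0"
    unfolding K_def by simp
  obtain w x where "x \<in> C w"
    using C_nonempty by blast
  then have "P \<noteq> {}"
    using c_pos unfolding P_def by blast
  then have "\<delta> > 0"
    unfolding \<delta>_def P_def using K by (subst zero_less_divide_iff, subst Min_gr_iff) auto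
  moreover have "social_cost c m \<ge> \<delta>" if adm: "\<forall>p\<in>set_pmf m. snd p \<in> C (fst p)" for m
  proof -
    obtain p where p: "pmf m p \<ge> 1 / K"
      using pmf_ge_inverse_card unfolding K_def by blast
    then have "p \<in> set_pmf m"
      using K by (auto simp: set_pmf_iff)
    then obtain e where e: "e \<in> snd p" "e \<in> P"
      using adm c_pos unfolding P_def by blast
    have "pmf m p \<le> load m e"
      unfolding load_def pmf.rep_eq using e(1)
      by (intro measure_pmf.finite_measure_mono) auto
    then have "c e (1 / K) \<le> c e (load m e)"
      using p K by (intro c_le) auto
    also have "\<dots> \<le> cost c m (fst p) (snd p)"
      unfolding cost_def using e(1) by (intro member_le_sum c_nonneg measure_nonneg) (auto simp: load_def)
    finally have "\<delta> \<le> cost c m (fst p) (snd p) / K"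
      unfolding \<delta>_def using e(2) K by (intro divide_right_mono order.trans[OF Min_le]) auto
    also have "\<dots> \<le> pmf m p * cost c m (fst p) (snd p)"
      using mult_right_mono[OF p cost_nonneg] by simp
    also have "\<dots> \<le> social_cost c m"
      unfolding social_cost_eq_sum by (intro member_le_sum mult_nonneg_nonneg cost_nonneg) auto
    finally show ?thesis .
  qed
  ultimately show thesis
    using that by blast
qed

lemma admissible_nonempty: "admissible C lam \<noteq> {}"
proof -
  define f where "f w = (SOME x. x \<in> C w)" for w
  have "f w \<in> C w" for w
    unfolding f_def using C_nonempty by (simp add: some_in_eq)
  then have "map_pmf (\<lambda>w. (w, f w)) lam \<in> admissible C lam"
    unfolding mem_admissible_iff by (simp add: pmf.map_comp comp_def)
  then show ?thesis
    by blast
qed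

lemma Inf_social_cost_admissible_lower_bound:
  obtains \<delta> where "\<delta> > 0" "\<And>lam. \<delta> \<le> Inf (social_cost c ` admissible C lam)"
proof -
  obtain \<delta> where \<delta>: "\<delta> > 0" "\<And>m. \<forall>p\<in>set_pmf m. snd p \<in> C (fst p) \<Longrightarrow> social_cost c m \<ge> \<delta>"
    using social_cost_lower_bound by blast
  then have "\<delta> \<le> Inf (social_cost c ` admissible C lam)" for lam
    using admissible_nonempty by (intro cInf_greatest) (auto simp: mem_admissible_iff)
  then show thesis
    using that \<delta>(1) by blast
qed

lemma social_cost_ratio_le_PoA:
  assumes m: "m \<in> mf_equilibria C c lam" and m': "m' \<in> admissible C lam"
  shows "social_cost c m / social_cost c m' \<le> PoA C c lam"
proof -
  obtain \<delta> where "\<delta> > 0" "\<delta> \<le> Inf (social_cost c ` admissible C lam)"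
    using Inf_social_cost_admissible_lower_bound by metis
  moreover have "Inf (social_cost c ` admissible C lam) \<le> social_cost c m'"
    using m' social_cost_nonneg by (intro cInf_lower bdd_belowI) auto
  moreover have "social_cost c m \<le> Sup (social_cost c ` mf_equilibria C c lam)"
    using m social_cost_le by (intro cSup_upper bdd_aboveI) auto
  ultimately show ?thesis
    unfolding PoA_def using social_cost_nonneg
    by (intro frac_le) (auto intro: order.trans[OF social_cost_nonneg])
qed

text \<open>\<open>Sup {}\<close> is an unspecified real, which enters \<open>PoA\<close> if there is no mean-field equilibrium.\<close>
lemma bdd_above_PoA: "bdd_above (range (PoA C c))"
proof -
  obtain \<delta> where \<delta>: "\<delta> > 0" "\<And>lam. \<delta> \<le> Inf (social_cost c ` admissible C lam)"
    using Inf_social_cost_admissible_lower_bound by blast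
  define B where "B = max (\<Sum>e\<in>UNIV. c e 1) \<bar>Sup {}\<bar>"
  have "Sup (social_cost c ` mf_equilibria C c lam) \<le> B" for lam
  proof (cases "mf_equilibria C c lam = {}")
    case False
    then show ?thesis
      unfolding B_def using social_cost_le by (intro max.coboundedI1 cSup_least) auto
  qed (simp add: B_def)
  moreover have "S / I \<le> B / \<delta>" if "S \<le> B" "\<delta> \<le> I" for S I
  proof (cases "S \<ge> 0")
    case True
    then show ?thesis
      using that \<delta>(1) by (intro frac_le) auto
  next
    case False
    then have "S / I \<le> 0"
      using that \<delta>(1) by (simp add: divide_nonpos_pos)
    also have "0 \<le> B / \<delta>"
      unfolding B_def using \<delta>(1) by simp
    finally show ?thesis .
  qed
  ultimately have "PoA C c lam \<le> B / \<delta>" for lam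
    unfolding PoA_def using \<delta>(2) by blast
  then show ?thesis
    by (intro bdd_aboveI) auto
qed

lemma cost_tendsto:
  fixes m :: "nat \<Rightarrow> ('w \<times> 'e set) pmf"
  assumes "converges_pmf m \<mu>"
  shows "(\<lambda>k. cost c (m k) w x) \<longlonglongrightarrow> cost c \<mu> w x"
  unfolding cost_def
proof (intro tendsto_sum)
  fix e
  have "(\<lambda>k. load (m k) e) \<longlonglongrightarrow> load \<mu> e"
    using assms unfolding load_eq_sum converges_pmf_def by (intro tendsto_sum) auto
  then show "(\<lambda>k. c e (load (m k) e)) \<longlonglongrightarrow> c e (load \<mu> e)"
    by (rule continuous_on_tendsto_compose[OF c_continuous]) (auto simp: load_def)
qed

lemma social_cost_tendsto:
  fixes m :: "nat \<Rightarrow> ('w \<times> 'e set) pmf"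
  assumes "converges_pmf m \<mu>"
  shows "(\<lambda>k. social_cost c (m k)) \<longlonglongrightarrow> social_cost c \<mu>"
  using assms unfolding social_cost_eq_sum converges_pmf_def
  by (intro tendsto_sum tendsto_mult cost_tendsto[OF assms]) auto

lemma approx_equilibrium_limit:
  fixes m :: "nat \<Rightarrow> ('w \<times> 'e set) pmf"
  assumes m: "converges_pmf m \<mu>" and \<eta>: "\<eta> \<longlonglongrightarrow> 0"
    and eq: "\<And>k. approx_equilibrium C c (\<eta> k) (m k)"
  shows "approx_equilibrium C c 0 \<mu>"
  unfolding approx_equilibrium_def
proof (intro ballI conjI)
  fix p assume "p \<in> set_pmf \<mu>"
  then have ev: "eventually (\<lambda>k. p \<in> set_pmf (m k)) sequentially"
    by (rule converges_pmf_eventually_in_set_pmf[OF m])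
  then show "snd p \<in> C (fst p)"
    using eq unfolding approx_equilibrium_def eventually_sequentially by blast
  fix y assume "y \<in> C (fst p)"
  then have le: "eventually (\<lambda>k. cost c (m k) (fst p) (snd p) \<le> cost c (m k) (fst p) y + \<eta> k) sequentially"
    using ev eq unfolding approx_equilibrium_def by (auto elim: eventually_mono)
  show "cost c \<mu> (fst p) (snd p) \<le> cost c \<mu> (fst p) y + 0"
    by (rule tendsto_le[OF sequentially_bot _ _ le]) (intro tendsto_add cost_tendsto m \<eta>)+
qed

lemma PoA_ge_limit:
  fixes m m' :: "nat \<Rightarrow> ('w \<times> 'e set) pmf"
  assumes m: "converges_pmf m \<mu>" and m': "converges_pmf m' \<mu>'"
    and \<eta>: "\<eta> \<longlonglongrightarrow> 0" and eq: "\<And>k. approx_equilibrium C c (\<eta> k) (m k)"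
    and adm: "\<And>k. m' k \<in> admissible C (map_pmf fst (m k))"
    and ratio: "\<And>k. r \<le> social_cost c (m k) / social_cost c (m' k)"
  shows "r \<le> PoA C c (map_pmf fst \<mu>)"
proof -
  have "converges_pmf (\<lambda>k. map_pmf fst (m k)) (map_pmf fst \<mu>')"
    using converges_pmf_map[OF m', of fst] adm by (simp add: mem_admissible_iff)
  then have "map_pmf fst \<mu>' = map_pmf fst \<mu>"
    using converges_pmf_map[OF m] converges_pmf_unique by blast
  moreover have "set_pmf \<mu>' \<subseteq> {p. snd p \<in> C (fst p)}"
    using adm by (intro converges_pmf_set_pmf_subset[OF m']) (auto simp: mem_admissible_iff)
  ultimately have \<mu>': "\<mu>' \<in> admissible C (map_pmf fst \<mu>)"
    unfolding mem_admissible_iff by blast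
  obtain \<delta> where "\<delta> > 0" "\<And>m. \<forall>p\<in>set_pmf m. snd p \<in> C (fst p) \<Longrightarrow> social_cost c m \<ge> \<delta>"
    using social_cost_lower_bound by blast
  then have "social_cost c \<mu>' \<noteq> 0"
    using \<mu>' unfolding mem_admissible_iff by force
  then have "(\<lambda>k. social_cost c (m k) / social_cost c (m' k)) \<longlonglongrightarrow> social_cost c \<mu> / social_cost c \<mu>'"
    by (intro tendsto_divide social_cost_tendsto m m')
  then have "r \<le> social_cost c \<mu> / social_cost c \<mu>'"
    using ratio by (intro LIMSEQ_le_const) auto
  also have "\<dots> \<le> PoA C c (map_pmf fst \<mu>)"
    using \<mu>' by (intro social_cost_ratio_le_PoA mf_equilibriaI approx_equilibrium_limit[OF m \<eta> eq])
  finally show ?thesis .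
qed

lemma ex_PoA_ge_of_approx_equilibria:
  fixes m m' :: "nat \<Rightarrow> ('w \<times> 'e set) pmf"
  assumes \<eta>: "\<eta> \<longlonglongrightarrow> 0" and eq: "\<And>k. approx_equilibrium C c (\<eta> k) (m k)"
    and adm: "\<And>k. m' k \<in> admissible C (map_pmf fst (m k))"
    and supp: "\<And>k. set_pmf (map_pmf fst (m k)) \<subseteq> S"
    and ratio: "\<And>k. r \<le> social_cost c (m k) / social_cost c (m' k)"
  shows "\<exists>lam. set_pmf lam \<subseteq> S \<and> r \<le> PoA C c lam"
proof -
  obtain r1 \<mu> where r1: "strict_mono r1" "converges_pmf (m \<circ> r1) \<mu>"
    using converges_pmf_seq_compact by blast
  obtain r2 \<mu>' where r2: "strict_mono r2" "converges_pmf (m' \<circ> r1 \<circ> r2) \<mu>'"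
    using converges_pmf_seq_compact by blast
  have m: "converges_pmf (m \<circ> r1 \<circ> r2) \<mu>"
    using converges_pmf_subseq[OF r1(2) r2(1)] by (simp add: comp_assoc)
  have "(\<eta> \<circ> (r1 \<circ> r2)) \<longlonglongrightarrow> 0"
    using r1(1) r2(1) by (intro LIMSEQ_subseq_LIMSEQ[OF \<eta>] strict_mono_o)
  then have "r \<le> PoA C c (map_pmf fst \<mu>)"
    using eq adm ratio by (intro PoA_ge_limit[OF m r2(2)]) auto
  moreover have "set_pmf (map_pmf fst \<mu>) \<subseteq> S"
    using supp by (intro converges_pmf_set_pmf_subset[OF converges_pmf_map[OF m]]) auto
  ultimately show ?thesis
    by blast
qed

subsection \<open>Finite games\<close>

lemma ex_is_nash:
  assumes "n > 0"
  shows "\<exists>xs. is_nash C c n ws xs"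
proof -
  define P where "P = Pi\<^sub>E {..<n} (\<lambda>i. C (ws i))"
  define xs where "xs = arg_min_on (rosenthal_potential c n) P"
  have P: "finite P" "P \<noteq> {}"
    unfolding P_def using C_nonempty by (auto simp: finite_PiE PiE_eq_empty_iff)
  have xs: "xs \<in> P"
    unfolding xs_def by (rule arg_min_if_finite(1)[OF P])
  have "is_nash C c n ws xs"
  proof (rule is_nashI)
    show adm: "\<forall>i<n. xs i \<in> C (ws i)"
      using xs unfolding P_def by auto
    fix i y assume i: "i < n" and y: "y \<in> C (ws i)"
    then have "xs(i := y) \<in> P"
      using PiE_fun_upd[OF y xs[unfolded P_def]] unfolding P_def by (simp add: insert_absorb)
    then have "rosenthal_potential c n xs \<le> rosenthal_potential c n (xs(i := y))"
      unfolding xs_def by (rule arg_min_least[OF P])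
    then show "cost c (emp n ws xs) (ws i) (xs i) \<le> cost c (emp n ws (xs(i := y))) (ws i) y"
      using rosenthal_potential_fun_upd[OF i, of c xs y ws "ws i" "ws i"] by simp
  qed
  then show ?thesis
    by blast
qed

lemma uniformly_continuous_costs:
  assumes "\<epsilon> > 0"
  obtains d where "d > 0"
    "\<And>e s t. s \<in> {0..1} \<Longrightarrow> t \<in> {0..1} \<Longrightarrow> dist t s < d \<Longrightarrow> dist (c e t) (c e s) < \<epsilon>"
proof -
  have "\<exists>d>0. \<forall>s\<in>{0..1}. \<forall>t\<in>{0..1}. dist t s < d \<longrightarrow> dist (c e t) (c e s) < \<epsilon>" for e
  proof -
    have "uniformly_continuous_on {0..1} (c e)"
      by (intro compact_uniformly_continuous continuous_on_subset[OF c_continuous]) auto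
    then show ?thesis
      unfolding uniformly_continuous_on_def using assms by blast
  qed
  then obtain d where d: "\<And>e. d e > 0"
    "\<And>e s t. s \<in> {0..1} \<Longrightarrow> t \<in> {0..1} \<Longrightarrow> dist t s < d e \<Longrightarrow> dist (c e t) (c e s) < \<epsilon>"
    by metis
  have "Min (range d) > 0"
    using d(1) by (subst Min_gr_iff) auto
  moreover have "Min (range d) \<le> d e" for e
    by (intro Min_le) auto
  ultimately show thesis
    using that d(2) by (meson order_less_le_trans)
qed

lemma eventually_is_nash_approx_equilibrium:
  assumes "\<eta> > 0"
  shows "\<exists>N>0. \<forall>n\<ge>N. \<forall>ws xs. is_nash C c n ws xs \<longrightarrow> approx_equilibrium C c \<eta> (emp n ws xs)"
proof -
  define \<epsilon> where "\<epsilon> = \<eta> / CARD('e)"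
  have \<epsilon>: "\<epsilon> > 0"
    unfolding \<epsilon>_def using assms by simp
  obtain d where d: "d > 0"
    "\<And>e s t. s \<in> {0..1} \<Longrightarrow> t \<in> {0..1} \<Longrightarrow> dist t s < d \<Longrightarrow> dist (c e t) (c e s) < \<epsilon>"
    using uniformly_continuous_costs[OF \<epsilon>] by blast
  obtain N :: nat where N: "N > 0" "inverse N < d"
    using ex_inverse_of_nat_less[OF d(1)] by blast
  have "approx_equilibrium C c \<eta> (emp n ws xs)" if n: "n \<ge> N" and nash: "is_nash C c n ws xs"
    for n ws xs
  proof -
    have n0: "n > 0"
      using n N(1) by simp
    have "1 / n < d"
      using N n by (smt (verit) inverse_eq_divide le_imp_inverse_le of_nat_0_less_iff of_nat_mono)
    have "cost c (emp n ws xs) (ws i) (xs i) \<le> cost c (emp n ws xs) (ws i) y + \<eta>"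
      if i: "i < n" and y: "y \<in> C (ws i)" for i y
    proof -
      have "cost c (emp n ws (xs(i := y))) (ws i) y \<le> cost c (emp n ws xs) (ws i) y + card y * \<epsilon>"
        by (rule cost_emp_fun_upd_le[OF i \<open>1 / n < d\<close>]) (use d(2) in blast)
      moreover have "card y * \<epsilon> \<le> \<eta>"
        using mult_right_mono[of "card y" "CARD('e)" \<epsilon>] card_mono[of UNIV y] \<epsilon>
        unfolding \<epsilon>_def by simp
      ultimately show ?thesis
        using is_nashD[OF nash i y] by linarith
    qed
    then show ?thesis
      using nash unfolding approx_equilibrium_def set_pmf_emp[OF n0] is_nash_def by auto
  qed
  then show ?thesis
    using N(1) by blast
qed

lemma PoA_n_eq_ratio:
  assumes n: "n > 0"
  obtains xs m' where "is_nash C c n ws xs" "m' \<in> admissible C (map_pmf fst (emp n ws xs))"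
    "PoA_n C c n ws = social_cost c (emp n ws xs) / social_cost c m'"
proof -
  define nash_costs where "nash_costs = social_cost c ` nash_emp C c n ws"
  define adm_costs where "adm_costs = social_cost c ` adm_emp C n ws"
  have "nash_emp C c n ws \<noteq> {}"
    using ex_is_nash[OF n] unfolding nash_emp_def by blast
  moreover have "nash_emp C c n ws \<subseteq> adm_emp C n ws"
    unfolding nash_emp_def adm_emp_def is_nash_def by blast
  ultimately have "finite nash_costs" "nash_costs \<noteq> {}" "finite adm_costs" "adm_costs \<noteq> {}"
    unfolding nash_costs_def adm_costs_def nash_emp_def adm_emp_def
    by (auto simp: setcompr_eq_image intro!: finite_emp_image n)
  then have "Sup nash_costs \<in> nash_costs" "Inf adm_costs \<in> adm_costs"
    by (simp_all add: cSup_eq_Max cInf_eq_Min)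
  then obtain xs xs' where xs: "is_nash C c n ws xs" "social_cost c (emp n ws xs) = Sup nash_costs"
    and xs': "\<forall>i<n. xs' i \<in> C (ws i)" "social_cost c (emp n ws xs') = Inf adm_costs"
    unfolding nash_costs_def adm_costs_def nash_emp_def adm_emp_def by auto
  have "emp n ws xs' \<in> admissible C (map_pmf fst (emp n ws xs))"
    using xs' unfolding mem_admissible_iff map_fst_emp set_pmf_emp[OF n] by auto
  then show thesis
    using that xs xs' unfolding PoA_n_def nash_costs_def adm_costs_def by simp
qed

lemma eventually_PoA_n_less:
  assumes "\<epsilon> > 0"
  shows "\<exists>N. \<forall>n\<ge>N. \<forall>ws. (\<forall>i<n. ws i \<in> S) \<longrightarrow>
           PoA_n C c n ws < Sup {PoA C c lam | lam. set_pmf lam \<subseteq> S} + \<epsilon>"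
proof (rule ccontr)
  define R where "R = Sup {PoA C c lam | lam. set_pmf lam \<subseteq> S}"
  define \<eta> :: "nat \<Rightarrow> real" where "\<eta> k = inverse (Suc k)" for k
  assume "\<not> ?thesis"
  then have bad: "\<forall>N. \<exists>n\<ge>N. \<exists>ws. (\<forall>i<n. ws i \<in> S) \<and> R + \<epsilon> \<le> PoA_n C c n ws"
    unfolding R_def by (auto simp: not_less)
  have "\<exists>N>0. \<forall>n\<ge>N. \<forall>ws xs. is_nash C c n ws xs \<longrightarrow> approx_equilibrium C c (\<eta> k) (emp n ws xs)" for k
    by (rule eventually_is_nash_approx_equilibrium) (simp add: \<eta>_def)
  then obtain N where N: "\<And>k. N k > 0"
    "\<And>k n ws xs. n \<ge> N k \<Longrightarrow> is_nash C c n ws xs \<Longrightarrow> approx_equilibrium C c (\<eta> k) (emp n ws xs)"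
    by metis
  have "\<exists>m m'. approx_equilibrium C c (\<eta> k) m \<and> m' \<in> admissible C (map_pmf fst m) \<and>
          set_pmf (map_pmf fst m) \<subseteq> S \<and> R + \<epsilon> \<le> social_cost c m / social_cost c m'" for k
  proof -
    obtain n ws where n: "n \<ge> N k" and ws: "\<forall>i<n. ws i \<in> S" and big: "R + \<epsilon> \<le> PoA_n C c n ws"
      using bad by blast
    have n0: "n > 0"
      using N(1)[of k] n by linarith
    obtain xs m' where "is_nash C c n ws xs" "m' \<in> admissible C (map_pmf fst (emp n ws xs))"
      "PoA_n C c n ws = social_cost c (emp n ws xs) / social_cost c m'"
      using PoA_n_eq_ratio[OF n0] by blast
    moreover have "set_pmf (map_pmf fst (emp n ws xs)) \<subseteq> S"
      using ws by (auto simp: set_pmf_emp[OF n0])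
    ultimately show ?thesis
      using N(2)[OF n] big by metis
  qed
  then obtain m m' where "\<And>k. approx_equilibrium C c (\<eta> k) (m k)"
    "\<And>k. m' k \<in> admissible C (map_pmf fst (m k))" "\<And>k. set_pmf (map_pmf fst (m k)) \<subseteq> S"
    "\<And>k. R + \<epsilon> \<le> social_cost c (m k) / social_cost c (m' k)"
    by metis
  then obtain lam where "set_pmf lam \<subseteq> S" "R + \<epsilon> \<le> PoA C c lam"
    using ex_PoA_ge_of_approx_equilibria[OF LIMSEQ_inverse_real_of_nat[folded \<eta>_def]] by metis
  moreover have "PoA C c lam \<le> R" if "set_pmf lam \<subseteq> S" for lam
    unfolding R_def using that by (intro cSup_upper bdd_above_mono[OF bdd_above_PoA]) blast+
  ultimately show False
    using assms by fastforce
qed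

end

lemma AE_in_set_pmf_of_distr:
  assumes "X \<in> measurable M (count_space UNIV)" "distr M (count_space UNIV) X = measure_pmf p"
  shows "AE \<omega> in M. X \<omega> \<in> set_pmf p"
proof -
  have "AE x in distr M (count_space UNIV) X. x \<in> set_pmf p"
    unfolding assms(2) by (rule AE_measure_pmf)
  then show ?thesis
    by (subst (asm) AE_distr_iff[OF assms(1)]) auto
qed

lemma (in finite_measure) measure_Collect_eq_0_if_AE:
  assumes "AE \<omega> in M. \<not> P \<omega>"
  shows "measure M {\<omega> \<in> space M. P \<omega>} = 0"
proof -
  obtain Z where Z: "{\<omega> \<in> space M. \<not> \<not> P \<omega>} \<subseteq> Z" "emeasure M Z = 0" "Z \<in> sets M"
    using assms by (rule AE_E)
  then have "measure M {\<omega> \<in> space M. P \<omega>} \<le> measure M Z"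
    by (intro finite_measure_mono) auto
  also have "\<dots> = 0"
    using Z(2) by (simp add: measure_def)
  finally show ?thesis
    by (simp add: order_antisym)
qed

theorem corollary2p12:
  fixes C :: "'w::finite \<Rightarrow> 'e::finite set set"
    and c :: "'e \<Rightarrow> real \<Rightarrow> real"
    and lam0 :: "'w pmf"
    and M :: "'a measure"
    and W :: "nat \<Rightarrow> 'a \<Rightarrow> 'w"
  assumes C_ne: "\<forall>w. C w \<noteq> {}"
    and C_sub: "\<forall>w. \<forall>x\<in>C w. x \<noteq> {}"
    and c_cont: "\<forall>e. continuous_on {0..} (c e)"
    and c_mono: "\<forall>e. mono_on {0..} (c e)"
    and c_nonneg: "\<forall>e. \<forall>t\<ge>0. c e t \<ge> 0"
    and c_pos: "\<forall>w. \<forall>x\<in>C w. \<exists>e\<in>x. \<forall>t>0. c e t > 0"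
    and M: "prob_space M"
    and indep: "prob_space.indep_vars M (\<lambda>_. count_space UNIV) W UNIV"
    and law: "\<forall>i. distr M (count_space UNIV) (W i) = measure_pmf lam0"
  shows "\<forall>\<epsilon>>0. \<forall>\<kappa>>0. \<exists>N. \<forall>n\<ge>N.
           measure M {\<omega> \<in> space M.
             PoA_n C c n (\<lambda>i. W i \<omega>)
               \<ge> Sup {PoA C c lam | lam. set_pmf lam \<subseteq> set_pmf lam0} + \<epsilon>}
           \<le> exp (- \<kappa> * real n)"
proof (intro allI impI)
  interpret congestion_game C c
    using C_ne c_cont c_mono c_nonneg c_pos by unfold_locales auto
  interpret prob_space M
    by (rule M)
  fix \<epsilon> \<kappa> :: real assume "\<epsilon> > 0" "\<kappa> > 0"
  define R where "R = Sup {PoA C c lam | lam. set_pmf lam \<subseteq> set_pmf lam0}"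
  obtain N where N: "\<forall>n\<ge>N. \<forall>ws. (\<forall>i<n. ws i \<in> set_pmf lam0) \<longrightarrow> PoA_n C c n ws < R + \<epsilon>"
    using eventually_PoA_n_less[OF \<open>\<epsilon> > 0\<close>] unfolding R_def by blast
  have "AE \<omega> in M. W i \<omega> \<in> set_pmf lam0" for i
    using indep law unfolding indep_vars_def by (intro AE_in_set_pmf_of_distr) auto
  then have "AE \<omega> in M. \<forall>i. W i \<omega> \<in> set_pmf lam0"
    by (simp add: AE_all_countable)
  then have "AE \<omega> in M. \<not> PoA_n C c n (\<lambda>i. W i \<omega>) \<ge> R + \<epsilon>" if "n \<ge> N" for n
    by (rule AE_mp) (use N that in \<open>auto simp: not_le\<close>)
  then show "\<exists>N. \<forall>n\<ge>N. measure M {\<omega> \<in> space M. PoA_n C c n (\<lambda>i. W i \<omega>)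
               \<ge> Sup {PoA C c lam | lam. set_pmf lam \<subseteq> set_pmf lam0} + \<epsilon>} \<le> exp (- \<kappa> * real n)"
    unfolding R_def by (intro exI[of _ N] allI impI) (simp add: measure_Collect_eq_0_if_AE less_imp_le)
qed

end
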